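(* Let $X$ be a linearly ordered set and let $n\ge6$ be even. Then $\mathrm{med}_3\in\langle\{m^n_{n/2}\}\rangle$ and $\mathrm{med}_3\in\langle\{m^n_{n/2+1}\}\rangle$; in each case $\mathrm{med}_3(x_1,x_2,x_3)$ is obtained by substituting into $m^n_{n/2}$ (resp. $m^n_{n/2+1}$) the tuple $(x_1,\dots,x_1,x_2,\dots,x_2,x_3,\dots,x_3)$ where $x_j$ occurs $\lfloor n/3\rfloor+1$ times if $j\le R(n/3)$ and $\lfloor n/3\rfloor$ times otherwise. Consequently these lower and upper medians generate all median functions $\mathrm{med}_m$, $m\ge3$ odd.
   Context: For $n\ge1$, $1\le k\le n$, $m^n_k(x_1,\dots,x_n)$ is the $k$-th smallest entry of $(x_1,\dots,x_n)$ (counted with multiplicity); for odd $m$, $\mathrm{med}_m=m^m_{(m+1)/2}$. $R(n/3)$ is the remainder of $n$ upon division by $3$. A clone on $X$ is a set of finitary operations containing all projections and closed under composition; $\langle\mathscr F\rangle$ is the smallest clone containing $\mathscr F$. *)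

theory Defs
  imports Main
begin

text \<open>A finitary operation of arity k on the carrier (the type 'a) is a pair (k, f) where
  f is applied to lists of length k; values on lists of other lengths are irrelevant.\<close>

type_synonym 'a operation = "nat \<times> ('a list \<Rightarrow> 'a)"

definition is_clone :: "'a operation set \<Rightarrow> bool" where
  "is_clone C \<longleftrightarrow>
     (\<forall>k i. i < k \<longrightarrow> (k, \<lambda>xs. xs ! i) \<in> C) \<and>
     (\<forall>k f m gs. (k, f) \<in> C \<longrightarrow> length gs = k \<longrightarrow> (\<forall>g\<in>set gs. (m, g) \<in> C) \<longrightarrow>
        (m, \<lambda>xs. f (map (\<lambda>g. g xs) gs)) \<in> C) \<and>
     (\<forall>k f g. (k, f) \<in> C \<longrightarrow> (\<forall>xs. length xs = k \<longrightarrow> g xs = f xs) \<longrightarrow> (k, g) \<in> C)"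

definition clone_gen :: "'a operation set \<Rightarrow> 'a operation set" where
  "clone_gen F = \<Inter>{C. is_clone C \<and> F \<subseteq> C}"

definition kth_smallest :: "nat \<Rightarrow> 'a::linorder list \<Rightarrow> 'a" where
  "kth_smallest k xs = sort xs ! (k - 1)"

definition med :: "nat \<Rightarrow> 'a::linorder list \<Rightarrow> 'a" where
  "med m xs = kth_smallest ((m + 1) div 2) xs"

definition mult3 :: "nat \<Rightarrow> nat \<Rightarrow> nat" where
  "mult3 n j = (if j \<le> n mod 3 then n div 3 + 1 else n div 3)"

definition subst_tuple :: "nat \<Rightarrow> 'a \<Rightarrow> 'a \<Rightarrow> 'a \<Rightarrow> 'a list" where
  "subst_tuple n x1 x2 x3 =
     replicate (mult3 n 1) x1 @ replicate (mult3 n 2) x2 @ replicate (mult3 n 3) x3"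

end

(* Everything is read off threshold counts: the k-th smallest entry of a tuple is <= t iff at
   least k entries are <= t.  With the multiplicities of subst_tuple and k = n/2 or n/2 + 1, a
   single block of equal entries has fewer than k entries while any two blocks together have at
   least k, so the k-th smallest entry is <= t iff two of x1, x2, x3 are, as for med 3.

   For the generated clone, the median of an odd tuple of variables with repetitions is shown to
   lie in the clone of med 3 by induction on its length plus its number of distinct variables:
   if x_i occurs a times and x_j occurs b <= a times, the median is med 3 of the medians obtained
   by turning every x_j into x_i, every x_i into x_j, and by deleting b occurrences of each. *)

theory Submission
  imports Defs "HOL-Library.Multiset"
begin

lemma clone_proj: "is_clone C \<Longrightarrow> i < k \<Longrightarrow> (k, \<lambda>xs. xs ! i) \<in> C"
  unfolding is_clone_def by blast

lemma clone_comp: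
  "is_clone C \<Longrightarrow> (k, f) \<in> C \<Longrightarrow> length gs = k \<Longrightarrow> (\<forall>g\<in>set gs. (m, g) \<in> C) \<Longrightarrow>
    (m, \<lambda>xs. f (map (\<lambda>g. g xs) gs)) \<in> C"
  unfolding is_clone_def by blast

lemma clone_cong:
  "is_clone C \<Longrightarrow> (k, f) \<in> C \<Longrightarrow> (\<And>xs. length xs = k \<Longrightarrow> g xs = f xs) \<Longrightarrow> (k, g) \<in> C"
  unfolding is_clone_def by blast

lemma is_clone_Inter:
  assumes "\<And>C. C \<in> S \<Longrightarrow> is_clone C"
  shows "is_clone (\<Inter>S)"
  unfolding is_clone_def
proof (intro conjI allI impI)
  show "(k, \<lambda>xs. xs ! i) \<in> \<Inter>S" if "i < k" for k i
    using assms clone_proj that by blast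
  show "(m, \<lambda>xs. f (map (\<lambda>g. g xs) gs)) \<in> \<Inter>S"
    if "(k, f) \<in> \<Inter>S" "length gs = k" "\<forall>g\<in>set gs. (m, g) \<in> \<Inter>S" for k f m gs
  proof
    fix C assume "C \<in> S"
    with that show "(m, \<lambda>xs. f (map (\<lambda>g. g xs) gs)) \<in> C"
      using assms clone_comp by blast
  qed
  show "(k, g) \<in> \<Inter>S" if "(k, f) \<in> \<Inter>S" "\<forall>xs. length xs = k \<longrightarrow> g xs = f xs" for k f g
    using that assms clone_cong by blast
qed

lemma is_clone_clone_gen: "is_clone (clone_gen F)"
  unfolding clone_gen_def by (rule is_clone_Inter) blast

lemma clone_gen_superset: "F \<subseteq> clone_gen F"
  unfolding clone_gen_def by blast

lemma clone_minor:
  assumes "is_clone C" and "(k, f) \<in> C" and "length idx = k" and "set idx \<subseteq> {..<m}"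
  shows "(m, \<lambda>xs. f (map ((!) xs) idx)) \<in> C"
proof -
  have "(m, \<lambda>xs. f (map (\<lambda>g. g xs) (map (\<lambda>i xs. xs ! i) idx))) \<in> C"
    using assms by (intro clone_comp) (auto intro: clone_proj)
  then show ?thesis by (simp add: comp_def)
qed

lemma eq_by_upper_thresholds:
  fixes u v :: "'a::order"
  shows "(\<And>t. u \<le> t \<longleftrightarrow> v \<le> t) \<Longrightarrow> u = v"
  by (metis order.antisym order.refl)

lemma sorted_nth_le_iff:
  fixes s :: "'a::linorder list"
  assumes "sorted s" and "i < length s"
  shows "s ! i \<le> t \<longleftrightarrow> i < length (filter (\<lambda>x. x \<le> t) s)"
proof
  assume "s ! i \<le> t"
  have "s ! j \<le> t" if "j \<le> i" for j
    using sorted_nth_mono[OF assms(1) that assms(2)] \<open>s ! i \<le> t\<close> by simp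
  then have "\<forall>x\<in>set (take (Suc i) s). x \<le> t"
    by (auto simp: in_set_conv_nth)
  then have "Suc i \<le> length (filter (\<lambda>x. x \<le> t) (take (Suc i) s))"
    using assms(2) by simp
  also have "\<dots> \<le> length (filter (\<lambda>x. x \<le> t) s)"
    by (metis append_take_drop_id filter_append length_append le_add1)
  finally show "i < length (filter (\<lambda>x. x \<le> t) s)" by simp
next
  assume "i < length (filter (\<lambda>x. x \<le> t) s)"
  show "s ! i \<le> t"
  proof (rule ccontr)
    assume "\<not> s ! i \<le> t"
    have "\<not> s ! j \<le> t" if "i \<le> j" "j < length s" for j
      using sorted_nth_mono[OF assms(1) that] \<open>\<not> s ! i \<le> t\<close> by simp
    then have "\<forall>x\<in>set (drop i s). \<not> x \<le> t"
      by (auto simp: in_set_conv_nth)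
    then have "filter (\<lambda>x. x \<le> t) s = filter (\<lambda>x. x \<le> t) (take i s)"
      by (metis append_take_drop_id filter_append filter_False append_Nil2)
    then have "length (filter (\<lambda>x. x \<le> t) s) \<le> i"
      by (metis length_filter_le length_take min.bounded_iff)
    with \<open>i < length (filter (\<lambda>x. x \<le> t) s)\<close> show False by simp
  qed
qed

lemma kth_smallest_le_iff:
  fixes xs :: "'a::linorder list"
  assumes "1 \<le> k" and "k \<le> length xs"
  shows "kth_smallest k xs \<le> t \<longleftrightarrow> k \<le> length (filter (\<lambda>x. x \<le> t) xs)"
proof -
  have "length (filter (\<lambda>x. x \<le> t) (sort xs)) = length (filter (\<lambda>x. x \<le> t) xs)"
    by (simp add: filter_sort)
  moreover have "k - 1 < length (filter (\<lambda>x. x \<le> t) xs) \<longleftrightarrow> k \<le> length (filter (\<lambda>x. x \<le> t) xs)"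
    using assms(1) by linarith
  ultimately show ?thesis
    using sorted_nth_le_iff[of "sort xs" "k - 1" t] assms by (simp add: kth_smallest_def)
qed

lemma kth_smallest_mset_cong: "mset xs = mset ys \<Longrightarrow> kth_smallest k xs = kth_smallest k ys"
  unfolding kth_smallest_def by (metis sorted_list_of_multiset_mset)

definition list_median :: "'a::linorder list \<Rightarrow> 'a" where
  "list_median xs = med (length xs) xs"

lemma list_median_le_iff:
  fixes xs :: "'a::linorder list"
  assumes "odd (length xs)"
  shows "list_median xs \<le> t \<longleftrightarrow> length xs < 2 * length (filter (\<lambda>x. x \<le> t) xs)"
proof -
  obtain h where h: "length xs = 2 * h + 1" using assms by (auto elim: oddE)
  then have "list_median xs \<le> t \<longleftrightarrow> h + 1 \<le> length (filter (\<lambda>x. x \<le> t) xs)"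
    using kth_smallest_le_iff[of "h + 1" xs t] by (simp add: list_median_def med_def)
  then show ?thesis using h by linarith
qed

lemma list_median_mset_cong: "mset xs = mset ys \<Longrightarrow> list_median xs = list_median ys"
  unfolding list_median_def med_def by (metis kth_smallest_mset_cong mset_eq_length)

lemma list_median_replicate: "odd k \<Longrightarrow> list_median (replicate k x) = x"
  using odd_pos[of k] by (simp add: list_median_def med_def kth_smallest_def)

lemma med3_le_iff:
  fixes u v w :: "'a::linorder"
  shows "med 3 [u, v, w] \<le> t \<longleftrightarrow> 2 \<le> length (filter (\<lambda>z. z \<le> t) [u, v, w])"
  using kth_smallest_le_iff[of 2 "[u, v, w]" t] by (simp add: med_def)

lemma list_median_eq_med3:
  fixes x y :: "'a::linorder"
  assumes "odd (a + b + length R)" and "b \<le> a"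
  shows "list_median (replicate a x @ replicate b y @ R) =
    med 3 [list_median (replicate (a + b) x @ R), list_median (replicate (a + b) y @ R),
           list_median (replicate (a - b) x @ R)]"
proof (rule eq_by_upper_thresholds)
  fix t
  define N where "N = a + b + length R"
  define r where "r = length (filter (\<lambda>z. z \<le> t) R)"
  have "2 * b \<le> N"
    using assms(2) by (simp add: N_def)
  have "odd (a - b + length R)"
    using assms by presburger
  then have odd: "odd (length (replicate a x @ replicate b y @ R))"
    "odd (length (replicate (a + b) x @ R))" "odd (length (replicate (a + b) y @ R))"
    "odd (length (replicate (a - b) x @ R))"
    using assms(1) \<open>odd (a - b + length R)\<close> unfolding length_append length_replicate
    by (simp_all only: add.assoc)
  have
    "list_median (replicate a x @ replicate b y @ R) \<le> t \<longleftrightarrow>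
      N < 2 * ((if x \<le> t then a else 0) + (if y \<le> t then b else 0) + r)"
    "list_median (replicate (a + b) x @ R) \<le> t \<longleftrightarrow> N < 2 * ((if x \<le> t then a + b else 0) + r)"
    "list_median (replicate (a + b) y @ R) \<le> t \<longleftrightarrow> N < 2 * ((if y \<le> t then a + b else 0) + r)"
    "list_median (replicate (a - b) x @ R) \<le> t \<longleftrightarrow> N - 2 * b < 2 * ((if x \<le> t then a - b else 0) + r)"
    unfolding list_median_le_iff[OF odd(1)] list_median_le_iff[OF odd(2)]
      list_median_le_iff[OF odd(3)] list_median_le_iff[OF odd(4)]
    using assms(2) by (simp_all add: N_def r_def filter_replicate add.assoc)
  then show "list_median (replicate a x @ replicate b y @ R) \<le> t \<longleftrightarrow>
    med 3 [list_median (replicate (a + b) x @ R), list_median (replicate (a + b) y @ R),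
           list_median (replicate (a - b) x @ R)] \<le> t"
    unfolding med3_le_iff using assms(2) \<open>2 * b \<le> N\<close> by (cases "x \<le> t"; cases "y \<le> t") auto
qed

lemma list_median_minor_eq_med3:
  fixes xs :: "'a::linorder list"
  assumes "mset L = mset (replicate a i @ replicate b j @ R)" and "odd (length L)" and "b \<le> a"
  shows "list_median (map ((!) xs) L) =
    med 3 [list_median (map ((!) xs) (replicate (a + b) i @ R)),
           list_median (map ((!) xs) (replicate (a + b) j @ R)),
           list_median (map ((!) xs) (replicate (a - b) i @ R))]"
proof -
  have "length L = a + b + length R"
    using mset_eq_length[OF assms(1)] by simp
  have "list_median (map ((!) xs) L) =
      list_median (replicate a (xs ! i) @ replicate b (xs ! j) @ map ((!) xs) R)"
    by (rule list_median_mset_cong) (metis assms(1) mset_map map_append map_replicate)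
  also have "\<dots> = med 3 [list_median (replicate (a + b) (xs ! i) @ map ((!) xs) R),
      list_median (replicate (a + b) (xs ! j) @ map ((!) xs) R),
      list_median (replicate (a - b) (xs ! i) @ map ((!) xs) R)]"
    by (rule list_median_eq_med3) (use assms(2,3) \<open>length L = a + b + length R\<close> in simp_all)
  finally show ?thesis
    by simp
qed

lemma list_median_minor_in_clone:
  fixes C :: "'a::linorder operation set"
  assumes clone: "is_clone C" and med3: "(3, med 3) \<in> C"
  shows "odd (length L) \<Longrightarrow> set L \<subseteq> {..<m} \<Longrightarrow> (m, \<lambda>xs. list_median (map ((!) xs) L)) \<in> C"
proof (induction "length L + card (set L)" arbitrary: L rule: less_induct)
  case less
  show ?case
  proof (cases "\<exists>i\<in>set L. \<exists>j\<in>set L. i \<noteq> j")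
    case False
    obtain i where "i \<in> set L"
      using less.prems(1) by (cases L) auto
    with False have L: "L = replicate (length L) i"
      by (metis replicate_length_same)
    have "(m, \<lambda>xs. xs ! i) \<in> C"
      using clone_proj[OF clone] \<open>i \<in> set L\<close> less.prems(2) by blast
    then show ?thesis
    proof (rule clone_cong[OF clone])
      show "list_median (map ((!) xs) L) = xs ! i" for xs :: "'a list"
        using less.prems(1) by (subst L) (simp add: list_median_replicate)
    qed
  next
    case True
    then obtain i j where ij: "i \<in> set L" "j \<in> set L" "i \<noteq> j" "count (mset L) j \<le> count (mset L) i"
      by (metis nat_le_linear)
    define a b R where "a = count (mset L) i" and "b = count (mset L) j"
      and "R = filter (\<lambda>k. k \<noteq> i \<and> k \<noteq> j) L"
    have "b \<le> a" "1 \<le> b"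
      using ij by (auto simp: a_def b_def Suc_le_eq)
    have mset_L: "mset L = mset (replicate a i @ replicate b j @ R)"
      using ij(3) by (auto simp: a_def b_def R_def multiset_eq_iff)
    define L1 L2 L3 where "L1 = replicate (a + b) i @ R" and "L2 = replicate (a + b) j @ R"
      and "L3 = replicate (a - b) i @ R"
    have lengths: "length L1 = length L" "length L2 = length L" "length L3 + 2 * b = length L"
      using mset_eq_length[OF mset_L] \<open>b \<le> a\<close> by (simp_all add: L1_def L2_def L3_def)
    have sets: "set L1 \<subseteq> set L - {j}" "set L2 \<subseteq> set L - {i}" "set L3 \<subseteq> set L"
      using ij by (auto simp: L1_def L2_def L3_def R_def)
    have cards: "card (set L1) < card (set L)" "card (set L2) < card (set L)" "card (set L3) \<le> card (set L)"
      using card_mono[OF _ sets(1)] card_mono[OF _ sets(2)] card_mono[OF _ sets(3)] ij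
        card_Diff1_less[of "set L" j] card_Diff1_less[of "set L" i] by auto
    have "(m, \<lambda>xs. list_median (map ((!) xs) L')) \<in> C" if "L' \<in> {L1, L2, L3}" for L'
    proof (rule less.hyps)
      show "length L' + card (set L') < length L + card (set L)" and "odd (length L')"
        using that lengths cards less.prems(1) \<open>1 \<le> b\<close> by auto presburger
      show "set L' \<subseteq> {..<m}"
        using that sets less.prems(2) by auto
    qed
    then have "(m, \<lambda>xs. med 3 (map (\<lambda>g. g xs) [\<lambda>xs. list_median (map ((!) xs) L1),
        \<lambda>xs. list_median (map ((!) xs) L2), \<lambda>xs. list_median (map ((!) xs) L3)])) \<in> C"
      by (intro clone_comp[OF clone med3]) auto
    then show ?thesis
      by (rule clone_cong[OF clone])
        (simp add: list_median_minor_eq_med3[OF mset_L less.prems(1) \<open>b \<le> a\<close>] L1_def L2_def L3_def)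
  qed
qed

lemma med_in_clone:
  fixes C :: "'a::linorder operation set"
  assumes "is_clone C" and "(3, med 3) \<in> C" and "odd m"
  shows "(m, med m) \<in> C"
proof (rule clone_cong[OF assms(1)])
  show "(m, \<lambda>xs. list_median (map ((!) xs) [0..<m])) \<in> C"
    by (rule list_median_minor_in_clone[OF assms(1,2)]) (use assms(3) in auto)
  show "med m xs = list_median (map ((!) xs) [0..<m])" if "length xs = m" for xs :: "'a list"
    using map_nth[of xs] that by (simp add: list_median_def)
qed

lemma kth_smallest_replicate3_eq_med3:
  fixes x1 x2 x3 :: "'a::linorder"
  assumes "w1 < k" "w2 < k" "w3 < k" "k \<le> w1 + w2" "k \<le> w1 + w3" "k \<le> w2 + w3"
  shows "kth_smallest k (replicate w1 x1 @ replicate w2 x2 @ replicate w3 x3) = med 3 [x1, x2, x3]"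
proof (rule eq_by_upper_thresholds)
  fix t
  have k: "1 \<le> k" "k \<le> length (replicate w1 x1 @ replicate w2 x2 @ replicate w3 x3)"
    using assms by simp_all
  show "kth_smallest k (replicate w1 x1 @ replicate w2 x2 @ replicate w3 x3) \<le> t \<longleftrightarrow>
      med 3 [x1, x2, x3] \<le> t"
    unfolding kth_smallest_le_iff[OF k] med3_le_iff using assms
    by (cases "x1 \<le> t"; cases "x2 \<le> t"; cases "x3 \<le> t") (simp_all add: filter_replicate)
qed

(* n >= 6 is needed: for n = 4 the multiplicities are 2, 1, 1. *)
lemma mult3_majority:
  assumes "n \<ge> 6" and "even n" and "k = n div 2 \<or> k = n div 2 + 1"
  shows "mult3 n 1 < k" "mult3 n 2 < k" "mult3 n 3 < k"
    "k \<le> mult3 n 1 + mult3 n 2" "k \<le> mult3 n 1 + mult3 n 3" "k \<le> mult3 n 2 + mult3 n 3"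
proof -
  define q r where "q = n div 3" and "r = n mod 3"
  obtain h where h: "n = 2 * h"
    using assms(2) by blast
  have n: "2 * h = 3 * q + r" and "r < 3" and k: "k = h \<or> k = h + 1"
    using assms(3) by (simp_all add: q_def r_def h)
  have mult3: "mult3 n j = (if j \<le> r then q + 1 else q)" for j
    by (simp add: mult3_def q_def r_def)
  have "r = 0 \<or> r = 1 \<or> r = 2"
    using \<open>r < 3\<close> by linarith
  then show "mult3 n 1 < k" "mult3 n 2 < k" "mult3 n 3 < k"
    "k \<le> mult3 n 1 + mult3 n 2" "k \<le> mult3 n 1 + mult3 n 3" "k \<le> mult3 n 2 + mult3 n 3"
    unfolding mult3 using n k assms(1) h by (elim disjE; simp; linarith)+
qed

lemma length_subst_tuple: "length (subst_tuple n x1 x2 x3) = n"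
proof -
  define q r where "q = n div 3" and "r = n mod 3"
  have "n = 3 * q + r" and "r < 3"
    by (simp_all add: q_def r_def)
  moreover have "mult3 n j = (if j \<le> r then q + 1 else q)" for j
    by (simp add: mult3_def q_def r_def)
  ultimately show ?thesis
    unfolding subst_tuple_def by auto
qed

lemma med3_eq_kth_smallest_subst_tuple:
  assumes "n \<ge> 6" and "even n" and "k = n div 2 \<or> k = n div 2 + 1"
  shows "med 3 [x1, x2, x3] = kth_smallest k (subst_tuple n x1 x2 x3)"
  unfolding subst_tuple_def by (rule kth_smallest_replicate3_eq_med3[OF mult3_majority[OF assms], symmetric])

lemma med3_in_clone:
  fixes C :: "'a::linorder operation set"
  assumes "is_clone C" and "(n, f) \<in> C"
    and "\<And>x1 x2 x3. med 3 [x1, x2, x3] = f (subst_tuple n x1 x2 x3)"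
  shows "(3, med 3) \<in> C"
proof (rule clone_cong[OF assms(1)])
  show "(3, \<lambda>xs. f (map ((!) xs) (subst_tuple n 0 1 (2::nat)))) \<in> C"
    by (rule clone_minor[OF assms(1,2) length_subst_tuple]) (auto simp: subst_tuple_def)
  show "med 3 xs = f (map ((!) xs) (subst_tuple n 0 1 (2::nat)))" if "length xs = 3" for xs :: "'a list"
  proof -
    obtain x1 x2 x3 where "xs = [x1, x2, x3]"
      using \<open>length xs = 3\<close> by (metis length_0_conv length_Suc_conv numeral_3_eq_3)
    then show ?thesis
      using assms(3) by (simp add: subst_tuple_def)
  qed
qed

theorem mainTheorem13:
  fixes n :: nat
  assumes "n \<ge> 6" and "even n"
  shows "(3, med 3 :: 'a::linorder list \<Rightarrow> 'a) \<in> clone_gen {(n, kth_smallest (n div 2))}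
       \<and> (3, med 3 :: 'a list \<Rightarrow> 'a) \<in> clone_gen {(n, kth_smallest (n div 2 + 1))}
       \<and> (\<forall>x1 x2 x3 :: 'a. med 3 [x1, x2, x3] = kth_smallest (n div 2) (subst_tuple n x1 x2 x3))
       \<and> (\<forall>x1 x2 x3 :: 'a. med 3 [x1, x2, x3] = kth_smallest (n div 2 + 1) (subst_tuple n x1 x2 x3))
       \<and> (\<forall>m. odd m \<and> m \<ge> 3 \<longrightarrow>
            (m, med m :: 'a list \<Rightarrow> 'a) \<in> clone_gen {(n, kth_smallest (n div 2))}
          \<and> (m, med m :: 'a list \<Rightarrow> 'a) \<in> clone_gen {(n, kth_smallest (n div 2 + 1))})"
proof -
  have subst: "med 3 [x1, x2, x3] = kth_smallest k (subst_tuple n x1 x2 x3)"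
    if "k = n div 2 \<or> k = n div 2 + 1" for k and x1 x2 x3 :: 'a
    using med3_eq_kth_smallest_subst_tuple[OF assms that] .
  have generated: "(m, med m :: 'a list \<Rightarrow> 'a) \<in> clone_gen {(n, kth_smallest k)}"
    if "k = n div 2 \<or> k = n div 2 + 1" and "odd m" for k m
  proof -
    have "(3, med 3) \<in> clone_gen {(n, kth_smallest k :: 'a list \<Rightarrow> 'a)}"
      using med3_in_clone[OF is_clone_clone_gen _ subst[OF that(1)]] clone_gen_superset by blast
    then show ?thesis
      using med_in_clone[OF is_clone_clone_gen _ that(2)] by blast
  qed
  show ?thesis
    using subst generated by auto
qed

end
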